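(* Let $\phi\colon\mathbb{N}\to(0,\infty)$ be a function. (1) If $\sum_{n=1}^\infty\frac{1}{\phi(n)}<\infty$, then for Lebesgue almost all $x\in(0,1)$, $\limsup_{n\to\infty}\frac{R_n(x)}{\phi(n)}=0$. (2) If $\sum_{n=1}^\infty\frac{1}{\phi(n)}=\infty$, then for Lebesgue almost all $x\in(0,1)$, $\limsup_{n\to\infty}\frac{R_n(x)}{\phi(n)}=\infty$.
   Context: Signed Engel expansion: define $T\colon[0,1)\to[0,1)$ by: for $k\in\mathbb{N}$, $Tx=\lceil 1/x\rceil x-1$ if $x\in(\frac{1}{2k},\frac{1}{2k-1})$; $Tx=1-\lfloor 1/x\rfloor x$ if $x\in(\frac{1}{2k+1},\frac{1}{2k})$; $Tx=0$ if $x\in\{0\}\cup\{1/n\colon n\ge 2\}$. For $x\in(0,1)$, $d_1(x)=\lceil 1/x\rceil$ if $x\in[\frac{1}{2k},\frac{1}{2k-1})$ for some $k\in\mathbb{N}$, and $d_1(x)=\lfloor 1/x\rfloor$ if $x\in[\frac{1}{2k+1},\frac{1}{2k})$ for some $k\in\mathbb{N}$; $d_{n+1}(x)=d_1(T^nx)$ (defined for all $n$ when $x$ is irrational). For irrational $x\in(0,1)$, $R_1(x)=d_1(x)$ and $R_n(x)=d_n(x)/d_{n-1}(x)$ for $n\ge2$. *)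

theory Defs
  imports "HOL-Analysis.Analysis"
begin

definition sengel_T :: "real \<Rightarrow> real" where
  "sengel_T x =
     (if x = 0 \<or> (\<exists>n::nat. n \<ge> 2 \<and> x = 1 / real n) then 0
      else if (\<exists>k::nat. k \<ge> 1 \<and> 1 / real (2*k) < x \<and> x < 1 / real (2*k - 1))
        then real_of_int (ceiling (1 / x)) * x - 1
      else 1 - real_of_int (floor (1 / x)) * x)"

text \<open>First digit d_1, for x in (0,1): the intervals [1/(2k),1/(2k-1)) and
  [1/(2k+1),1/(2k)), k >= 1, partition (0,1).\<close>
definition sengel_d1 :: "real \<Rightarrow> real" where
  "sengel_d1 x =
     (if (\<exists>k::nat. k \<ge> 1 \<and> 1 / real (2*k) \<le> x \<and> x < 1 / real (2*k - 1))
      then real_of_int (ceiling (1 / x))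
      else real_of_int (floor (1 / x)))"

definition sengel_d :: "nat \<Rightarrow> real \<Rightarrow> real" where
  "sengel_d n x = sengel_d1 ((sengel_T ^^ (n - 1)) x)"

definition sengel_R :: "nat \<Rightarrow> real \<Rightarrow> real" where
  "sengel_R n x = (if n \<le> 1 then sengel_d 1 x else sengel_d n x / sengel_d (n - 1) x)"

end

theory Submission
  imports Defs
begin

(* For irrational x the first digit is d_1 x = 2k, where k = sengel_k x is the integer nearest
   to 1/(2x), and T x = |2kx - 1|. So on the level set {sengel_k = k}, the interval
   (1/(2k+1), 1/(2k-1)), the map T has two affine branches of slope +-2k, onto (0, 1/(2k-1)) and
   (0, 1/(2k+1)), and both images are unions of level sets. Hence a measure whose Lebesgue density
   is constant on every level set keeps this property when pushed forward along T restricted to a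
   condition on two consecutive digits. Conditioned on any cylinder of digits, the probability that
   the next ratio R_(m+2) = k_(m+1) / k_m exceeds t is therefore between 1/(4(t+1)) and 2/t, as it
   is for a single level set. With t = e phi(m+2), the upper bound and Borel-Cantelli give the
   convergent case; in the divergent case the probability of never exceeding t after step N is at
   most a product of factors 1 - 1/(4(t_i+1)), which tends to 0. *)

lemma affine_branch_bounds_iff:
  fixes a x :: real
  assumes a: "1 \<le> a"
  shows "x < 1 / (2 * a - 1) \<longleftrightarrow> 2 * a * x - 1 < 1 / (2 * a - 1)"
    "1 / (2 * a + 1) < x \<longleftrightarrow> - 1 / (2 * a + 1) < 2 * a * x - 1"
proof -
  have left: "1 / (2 * a - 1) = 2 * a * (1 / (2 * a - 1)) - 1" using a by (simp add: field_simps)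
  show "x < 1 / (2 * a - 1) \<longleftrightarrow> 2 * a * x - 1 < 1 / (2 * a - 1)"
    by (subst (2) left)
      (use a in \<open>simp add: mult_less_cancel_left_pos del: times_divide_eq_right\<close>)
  have right: "- 1 / (2 * a + 1) = 2 * a * (1 / (2 * a + 1)) - 1" using a by (simp add: field_simps)
  show "1 / (2 * a + 1) < x \<longleftrightarrow> - 1 / (2 * a + 1) < 2 * a * x - 1"
    by (subst right)
      (use a in \<open>simp add: mult_less_cancel_left_pos del: times_divide_eq_right\<close>)
qed

lemma less_nat_iff_floor_Suc_le:
  fixes a :: real
  assumes "0 \<le> a"
  shows "a < real n \<longleftrightarrow> Suc (nat \<lfloor>a\<rfloor>) \<le> n"
  using assms by (simp add: Suc_le_eq nat_less_iff floor_less_iff)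

lemma Rats_null_sets: "(\<rat> :: real set) \<in> null_sets lborel"
  by (rule countable_imp_null_set_lborel[OF countable_rat])

lemma emeasure_lborel_affine_vimage:
  fixes c t :: real
  assumes c: "c \<noteq> 0" and [measurable]: "A \<in> sets borel" and f: "\<And>x. f x = c * x + t"
  shows "emeasure lborel (f -` A) = ennreal (1 / \<bar>c\<bar>) * emeasure lborel A"
proof -
  have "emeasure lborel A = ennreal \<bar>c\<bar> * emeasure lborel (f -` A)"
    by (subst lborel_real_affine[OF c, of t])
      (simp add: emeasure_density nn_integral_cmult_indicator emeasure_distr f add.commute
        vimage_def)
  moreover have "ennreal (1 / \<bar>c\<bar>) * ennreal \<bar>c\<bar> = 1"
    using c by (simp flip: ennreal_mult)
  ultimately show ?thesis by (simp add: mult.assoc[symmetric])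
qed

lemma emeasure_eq_suminf_level_sets:
  fixes f :: "'a \<Rightarrow> nat"
  assumes [measurable]: "A \<in> sets M" "f \<in> measurable M (count_space UNIV)"
  shows "emeasure M {x \<in> A. P (f x)} = (\<Sum>k. of_bool (P k) * emeasure M {x \<in> A. f x = k})"
proof -
  have "{x \<in> A. P (f x)} = (\<Union>k. {x \<in> A. P k \<and> f x = k})" by auto
  moreover have "disjoint_family (\<lambda>k. {x \<in> A. P k \<and> f x = k})"
    by (auto simp: disjoint_family_on_def)
  moreover have "{x \<in> A. P k \<and> f x = k} \<in> sets M" for k by measurable
  ultimately have "emeasure M {x \<in> A. P (f x)} = (\<Sum>k. emeasure M {x \<in> A. P k \<and> f x = k})"
    by (simp add: suminf_emeasure image_subset_iff)
  moreover have "emeasure M {x \<in> A. P k \<and> f x = k} = of_bool (P k) * emeasure M {x \<in> A. f x = k}"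
    for k
    by (cases "P k") simp_all
  ultimately show ?thesis by simp
qed

lemma ennreal_suminf_swap:
  fixes f :: "nat \<Rightarrow> nat \<Rightarrow> ennreal"
  shows "(\<Sum>i. \<Sum>j. f i j) = (\<Sum>j. \<Sum>i. f i j)"
proof -
  interpret pair_sigma_finite "count_space (UNIV :: nat set)" "count_space (UNIV :: nat set)"
    by (intro pair_sigma_finite.intro sigma_finite_measure_count_space)
  have "(\<integral>\<^sup>+ j. (\<integral>\<^sup>+ i. f i j \<partial>count_space UNIV) \<partial>count_space UNIV) =
      (\<integral>\<^sup>+ i. (\<integral>\<^sup>+ j. f i j \<partial>count_space UNIV) \<partial>count_space UNIV)"
    by (rule Fubini') (simp add: pair_measure_countable)
  then show ?thesis by (simp add: nn_integral_count_space_nat)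
qed

lemma prod_one_minus_tendsto_zero:
  fixes a :: "nat \<Rightarrow> real"
  assumes a: "\<And>i. 0 \<le> a i" "\<And>i. a i \<le> 1" and "\<not> summable a"
  shows "(\<lambda>m. \<Prod>i<m. 1 - a i) \<longlonglongrightarrow> 0"
proof (rule Lim_null_comparison)
  have "\<exists>n. Z < (\<Sum>i<n. a i)" for Z
  proof (rule ccontr)
    assume "\<not> (\<exists>n. Z < (\<Sum>i<n. a i))"
    then have "(\<Sum>i\<le>n. a i) \<le> Z" for n
      unfolding lessThan_Suc_atMost[symmetric] by (meson not_less)
    then have "summable a" by (rule bounded_imp_summable[OF a(1)])
    with \<open>\<not> summable a\<close> show False by contradiction
  qed
  then have "\<forall>\<^sub>F m in sequentially. Z \<le> (\<Sum>i<m. a i)" for Z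
    unfolding eventually_sequentially
    by (metis a(1) less_imp_le order.trans lessThan_subset_iff finite_lessThan sum_mono2)
  then have "filterlim (\<lambda>m. - (\<Sum>i<m. a i)) at_bot sequentially"
    by (simp add: filterlim_uminus_at_bot filterlim_at_top)
  then show "(\<lambda>m. exp (- (\<Sum>i<m. a i))) \<longlonglongrightarrow> 0"
    by (rule filterlim_compose[OF exp_at_bot])
  have "(\<Prod>i<m. 1 - a i) \<le> (\<Prod>i<m. exp (- a i))" for m
    using a by (intro prod_mono) (auto simp: exp_ge_add_one_self[of "- a _", simplified])
  moreover have "0 \<le> (\<Prod>i<m. 1 - a i)" for m using a by (intro prod_nonneg) auto
  ultimately show "\<forall>\<^sub>F m in sequentially. norm (\<Prod>i<m. 1 - a i) \<le> exp (- (\<Sum>i<m. a i))"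
    by (simp add: exp_sum[symmetric] sum_negf)
qed

lemma not_summable_inverse_affine:
  fixes f :: "nat \<Rightarrow> real"
  assumes f: "\<And>n. 0 < f n" and "\<not> summable (\<lambda>n. 1 / f n)" and c: "0 < c" and d: "0 < d"
  shows "\<not> summable (\<lambda>n. 1 / (c * f n + d))"
proof
  assume sum: "summable (\<lambda>n. 1 / (c * f n + d))"
  then have "\<forall>\<^sub>F n in sequentially. 1 / (c * f n + d) < 1 / (2 * d)"
    using summable_LIMSEQ_zero[OF sum] d by (auto dest: order_tendstoD(2)[of _ 0 _ "1 / (2 * d)"])
  then have "\<forall>\<^sub>F n in sequentially. norm (1 / f n) \<le> 2 * c * (1 / (c * f n + d))"
  proof (rule eventually_mono)
    fix n assume less: "1 / (c * f n + d) < 1 / (2 * d)"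
    have "d < c * f n"
    proof (rule ccontr)
      assume "\<not> d < c * f n"
      then have "1 / (2 * d) \<le> 1 / (c * f n + d)"
        using f[of n] c d by (intro divide_left_mono) (auto intro!: mult_pos_pos add_pos_pos)
      with less show False by simp
    qed
    then show "norm (1 / f n) \<le> 2 * c * (1 / (c * f n + d))"
      using f[of n] c d by (simp add: field_simps)
  qed
  then have "summable (\<lambda>n. 1 / f n)"
    by (rule summable_comparison_test_ev[OF _ summable_mult[OF sum]])
  with assms(2) show False by contradiction
qed

lemma limsup_ereal_eq_0:
  fixes f :: "nat \<Rightarrow> real"
  assumes "\<forall>\<^sub>F n in sequentially. 0 < f n"
    and "\<And>M::nat. \<forall>\<^sub>F n in sequentially. f n \<le> 1 / real (Suc M)"
  shows "limsup (\<lambda>n. ereal (f n)) = 0"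
proof -
  have "f \<longlonglongrightarrow> 0"
  proof (rule order_tendstoI)
    fix a :: real assume "a < 0"
    with assms(1) show "\<forall>\<^sub>F n in sequentially. a < f n" by (auto elim: eventually_mono)
  next
    fix a :: real assume "0 < a"
    then obtain M where M: "1 / real (Suc M) < a"
      using reals_Archimedean by (auto simp: inverse_eq_divide)
    from assms(2)[of M] show "\<forall>\<^sub>F n in sequentially. f n < a"
      by (rule eventually_mono) (use M in linarith)
  qed
  then show ?thesis
    using lim_imp_Limsup[OF trivial_limit_sequentially tendsto_ereal] by (simp add: zero_ereal_def)
qed

lemma limsup_ereal_eq_PInfty:
  fixes f :: "nat \<Rightarrow> real"
  assumes "\<And>M::nat. \<exists>\<^sub>F n in sequentially. real M < f n"
  shows "limsup (\<lambda>n. ereal (f n)) = \<infinity>"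
proof (rule ccontr)
  assume "limsup (\<lambda>n. ereal (f n)) \<noteq> \<infinity>"
  then obtain M :: nat where "limsup (\<lambda>n. ereal (f n)) < ereal (real M)"
    using less_PInf_Ex_of_nat by blast
  then have "\<forall>\<^sub>F n in sequentially. ereal (f n) < ereal (real M)"
    by (rule Limsup_lessD)
  then have "\<forall>\<^sub>F n in sequentially. \<not> real M < f n"
    by (rule eventually_mono) simp
  with assms[of M] show False by (simp add: frequently_def)
qed

section \<open>Digits of irrational numbers\<close>

definition irr01 :: "real set" where
  "irr01 = {0<..<1} - \<rat>"

definition sengel_k :: "real \<Rightarrow> nat" where
  "sengel_k x = nat \<lfloor>(1 / x + 1) / 2\<rfloor>"

lemma irr01_D:
  assumes "x \<in> irr01"
  shows "0 < x" "x < 1" "x \<notin> \<rat>" "1 / x \<notin> \<rat>"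
  using assms Rats_divide[OF Rats_1, of "1 / x"] by (auto simp: irr01_def)

lemma sengel_k_ge_iff:
  assumes x: "x \<in> irr01" and k: "1 \<le> k"
  shows "k \<le> sengel_k x \<longleftrightarrow> x < 1 / (2 * real k - 1)"
proof -
  have "2 * real k - 1 \<noteq> 1 / x"
    using irr01_D(4)[OF x] by (metis Rats_diff Rats_mult Rats_number_of Rats_of_nat Rats_1)
  moreover have "k \<le> nat m \<longleftrightarrow> int k \<le> m" for m
    using k by linarith
  then have "k \<le> sengel_k x \<longleftrightarrow> real k \<le> (1 / x + 1) / 2"
    by (simp add: sengel_k_def le_floor_iff)
  ultimately have "k \<le> sengel_k x \<longleftrightarrow> 2 * real k - 1 < 1 / x"
    by (auto simp: field_simps)
  also have "\<dots> \<longleftrightarrow> x < 1 / (2 * real k - 1)"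
    using k irr01_D(1)[OF x] by (auto simp: field_simps)
  finally show ?thesis .
qed

lemma sengel_k_ge_1:
  assumes "x \<in> irr01"
  shows "1 \<le> sengel_k x"
  using sengel_k_ge_iff[OF assms order.refl] irr01_D[OF assms] by simp

lemma sengel_k_bounds:
  assumes x: "x \<in> irr01"
  shows "2 * real (sengel_k x) - 1 < 1 / x" "1 / x < 2 * real (sengel_k x) + 1"
    "1 / x \<noteq> 2 * real (sengel_k x)"
proof -
  let ?k = "sengel_k x"
  have k: "1 \<le> ?k" by (rule sengel_k_ge_1[OF x])
  have "x < 1 / (2 * real ?k - 1)" using sengel_k_ge_iff[OF x k] by simp
  then show "2 * real ?k - 1 < 1 / x"
    using k irr01_D(1)[OF x] by (auto simp: field_simps)
  have "\<not> x < 1 / (2 * real (Suc ?k) - 1)" using sengel_k_ge_iff[OF x, of "Suc ?k"] by simp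
  moreover have "1 / x \<noteq> 2 * real ?k + 1" "1 / x \<noteq> 2 * real ?k"
    using irr01_D(4)[OF x] by (metis Rats_add Rats_mult Rats_number_of Rats_of_nat Rats_1)+
  ultimately show "1 / x < 2 * real ?k + 1" "1 / x \<noteq> 2 * real ?k"
    using irr01_D(1)[OF x] by (auto simp: field_simps)
qed

lemma sengel_k_eq_iff:
  assumes x: "x \<in> irr01" and k: "1 \<le> k"
  shows "sengel_k x = k \<longleftrightarrow> 1 / (2 * real k + 1) < x \<and> x < 1 / (2 * real k - 1)"
proof -
  have "x \<noteq> 1 / (2 * real k + 1)" using irr01_D(3)[OF x] by auto
  moreover have "sengel_k x = k \<longleftrightarrow> k \<le> sengel_k x \<and> \<not> Suc k \<le> sengel_k x" by auto
  ultimately show ?thesis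
    using sengel_k_ge_iff[OF x k] sengel_k_ge_iff[OF x, of "Suc k"] by (auto simp: add.commute)
qed

lemma sengel_k_eq_0_empty:
  "{x \<in> irr01. sengel_k x = 0} = {}" "{x \<in> irr01. sengel_k x = 0 \<and> P x} = {}"
  using sengel_k_ge_1 by fastforce+

lemma sengel_left_half_iff:
  assumes x: "x \<in> irr01"
  shows "(\<exists>k::nat. k \<ge> 1 \<and> 1 / real (2*k) \<le> x \<and> x < 1 / real (2*k - 1)) \<longleftrightarrow>
      1 / x < 2 * real (sengel_k x)"
    "(\<exists>k::nat. k \<ge> 1 \<and> 1 / real (2*k) < x \<and> x < 1 / real (2*k - 1)) \<longleftrightarrow>
      1 / x < 2 * real (sengel_k x)"
proof -
  have "1 / x < 2 * real (sengel_k x)"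
    if "k \<ge> 1" "1 / real (2*k) \<le> x" "x < 1 / real (2*k - 1)" for k
  proof -
    have "k \<le> sengel_k x" using sengel_k_ge_iff[OF x \<open>k \<ge> 1\<close>] that by (simp add: of_nat_diff)
    then have "1 / x \<le> 2 * real k" using that irr01_D(1)[OF x] by (auto simp: field_simps)
    moreover have "1 / x \<noteq> 2 * real k"
      using irr01_D(4)[OF x] by (metis Rats_mult Rats_number_of Rats_of_nat)
    ultimately show ?thesis using \<open>k \<le> sengel_k x\<close> by linarith
  qed
  moreover have "1 / real (2 * sengel_k x) < x \<and> x < 1 / real (2 * sengel_k x - 1)"
    if "1 / x < 2 * real (sengel_k x)"
    using that sengel_k_bounds[OF x] sengel_k_ge_1[OF x] irr01_D(1)[OF x]
    by (auto simp: field_simps of_nat_diff)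
  ultimately show
    "(\<exists>k::nat. k \<ge> 1 \<and> 1 / real (2*k) \<le> x \<and> x < 1 / real (2*k - 1)) \<longleftrightarrow>
      1 / x < 2 * real (sengel_k x)"
    "(\<exists>k::nat. k \<ge> 1 \<and> 1 / real (2*k) < x \<and> x < 1 / real (2*k - 1)) \<longleftrightarrow>
      1 / x < 2 * real (sengel_k x)"
    using sengel_k_ge_1[OF x] by (metis less_imp_le)+
qed

lemma sengel_d1_eq:
  assumes x: "x \<in> irr01"
  shows "sengel_d1 x = 2 * real (sengel_k x)"
proof (cases "1 / x < 2 * real (sengel_k x)")
  case True
  then have "\<lceil>1 / x\<rceil> = 2 * int (sengel_k x)"
    using sengel_k_bounds[OF x] by (simp add: ceiling_eq_iff)
  with True show ?thesis unfolding sengel_d1_def sengel_left_half_iff[OF x] by simp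
next
  case False
  then have "\<lfloor>1 / x\<rfloor> = 2 * int (sengel_k x)"
    using sengel_k_bounds[OF x] by (simp add: floor_eq_iff)
  with False show ?thesis unfolding sengel_d1_def sengel_left_half_iff[OF x] by simp
qed

lemma sengel_T_eq:
  assumes x: "x \<in> irr01"
  shows "sengel_T x = \<bar>2 * real (sengel_k x) * x - 1\<bar>"
proof -
  have not_special: "\<not> (x = 0 \<or> (\<exists>n::nat. n \<ge> 2 \<and> x = 1 / real n))"
    using irr01_D(1,3)[OF x] by auto
  have x0: "0 < x" by (rule irr01_D(1)[OF x])
  show ?thesis
  proof (cases "1 / x < 2 * real (sengel_k x)")
    case True
    then have "\<lceil>1 / x\<rceil> = 2 * int (sengel_k x)"
      using sengel_k_bounds[OF x] by (simp add: ceiling_eq_iff)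
    moreover have "1 < 2 * real (sengel_k x) * x" using True x0 by (simp add: field_simps)
    ultimately show ?thesis
      using True unfolding sengel_T_def sengel_left_half_iff[OF x] if_not_P[OF not_special] by simp
  next
    case False
    then have "\<lfloor>1 / x\<rfloor> = 2 * int (sengel_k x)"
      using sengel_k_bounds[OF x] by (simp add: floor_eq_iff)
    moreover have "2 * real (sengel_k x) * x < 1"
      using False sengel_k_bounds(3)[OF x] x0 by (simp add: field_simps)
    ultimately show ?thesis
      using False unfolding sengel_T_def sengel_left_half_iff[OF x] if_not_P[OF not_special] by simp
  qed
qed

lemma sengel_T_irr01:
  assumes x: "x \<in> irr01"
  shows "sengel_T x \<in> irr01"
proof -
  define k where "k = real (sengel_k x)"
  have k: "1 \<le> k" using sengel_k_ge_1[OF x] by (simp add: k_def)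
  have "2 * k * x - 1 \<notin> \<rat>"
  proof
    assume "2 * k * x - 1 \<in> \<rat>"
    moreover have "2 * k \<in> \<rat>" by (simp add: k_def)
    ultimately have "(2 * k * x - 1 + 1) / (2 * k) \<in> \<rat>" by (intro Rats_divide Rats_add Rats_1)
    moreover have "(2 * k * x - 1 + 1) / (2 * k) = x" using k by simp
    ultimately show False using irr01_D(3)[OF x] by simp
  qed
  moreover have "-1 < 2 * k * x - 1" "2 * k * x - 1 < 1"
    using sengel_k_bounds(1)[OF x] k irr01_D(1,2)[OF x] by (auto simp: k_def field_simps)
  moreover have "\<bar>u\<bar> \<in> irr01" if "u \<notin> \<rat>" "- 1 < u" "u < 1" for u :: real
  proof -
    have "u \<noteq> 0" using that(1) by auto
    then show ?thesis using that by (cases "u < 0") (auto simp: irr01_def Rats_minus_iff)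
  qed
  ultimately show ?thesis
    unfolding sengel_T_eq[OF x] k_def[symmetric] by blast
qed

lemma funpow_sengel_T_irr01: "x \<in> irr01 \<Longrightarrow> (sengel_T ^^ n) x \<in> irr01"
  by (induction n) (auto intro: sengel_T_irr01)

lemma sengel_R_Suc_Suc:
  assumes "x \<in> irr01"
  shows "sengel_R (Suc (Suc m)) x =
    real (sengel_k ((sengel_T ^^ Suc m) x)) / real (sengel_k ((sengel_T ^^ m) x))"
  using funpow_sengel_T_irr01[OF assms] sengel_T_irr01
  by (simp add: sengel_R_def sengel_d_def sengel_d1_eq)

lemma sengel_R_pos:
  assumes "x \<in> irr01"
  shows "0 < sengel_R n x"
  using assms funpow_sengel_T_irr01[OF assms] sengel_k_ge_1
  by (simp add: sengel_R_def sengel_d_def sengel_d1_eq Suc_le_eq)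

lemma sengel_R_gt_iff:
  assumes "x \<in> irr01"
  shows "t < sengel_R (Suc (Suc m)) x \<longleftrightarrow>
    t * real (sengel_k ((sengel_T ^^ m) x)) < real (sengel_k ((sengel_T ^^ Suc m) x))"
  using sengel_k_ge_1[OF funpow_sengel_T_irr01[OF assms, of m]]
  by (simp add: sengel_R_Suc_Suc[OF assms] pos_less_divide_eq)

section \<open>Lebesgue measure of preimages under T\<close>

lemma irr01_sets [measurable]: "irr01 \<in> sets borel"
proof -
  have [measurable]: "(\<rat> :: real set) \<in> sets borel"
    using Rats_null_sets by (simp add: null_sets_def)
  show ?thesis unfolding irr01_def by measurable
qed

lemma sengel_k_measurable [measurable]: "sengel_k \<in> measurable borel (count_space UNIV)"
  unfolding sengel_k_def by measurable

lemma sengel_T_measurable [measurable]: "sengel_T \<in> borel_measurable borel"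
  unfolding sengel_T_def by measurable

lemma sengel_T_preimage_eq:
  assumes S: "S \<subseteq> irr01" and k: "1 \<le> k"
  shows "{x \<in> irr01. sengel_k x = k \<and> sengel_T x \<in> S} =
    (\<lambda>x. 2 * real k * x - 1) -` {z \<in> S. k \<le> sengel_k z} \<union>
    (\<lambda>x. 1 - 2 * real k * x) -` {z \<in> S. k < sengel_k z}"
    (is "?A = ?B")
proof -
  have band: "1 / (2 * real k + 1) < x \<and> x < 1 / (2 * real k - 1) \<longleftrightarrow>
    - 1 / (2 * real k + 1) < 2 * real k * x - 1 \<and> 2 * real k * x - 1 < 1 / (2 * real k - 1)" for x
    using affine_branch_bounds_iff[of "real k" x] k by simp
  have "z \<in> S \<Longrightarrow> k \<le> sengel_k z \<longleftrightarrow> z < 1 / (2 * real k - 1)"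
    "z \<in> S \<Longrightarrow> k < sengel_k z \<longleftrightarrow> z < 1 / (2 * real k + 1)" for z
    using S sengel_k_ge_iff[of z k] sengel_k_ge_iff[of z "Suc k"] k
    by (auto simp: Suc_le_eq add.commute)
  moreover have lower: "- (1 / (2 * real k + 1)) < u" if "0 \<le> u" for u :: real
  proof -
    have "0 < 1 / (2 * real k + 1)" by simp
    with that show ?thesis by linarith
  qed
  ultimately have B: "?B = {x. \<bar>2 * real k * x - 1\<bar> \<in> S \<and>
    - 1 / (2 * real k + 1) < 2 * real k * x - 1 \<and> 2 * real k * x - 1 < 1 / (2 * real k - 1)}"
    using S k by (auto simp: abs_if irr01_def intro: order.strict_trans[of _ 0] lower)
  show ?thesis
  proof (intro equalityI subsetI)
    fix x assume "x \<in> ?A"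
    then have x: "x \<in> irr01" "sengel_k x = k" "sengel_T x \<in> S" by auto
    then show "x \<in> ?B"
      unfolding B using sengel_k_eq_iff[OF x(1) k] band sengel_T_eq[OF x(1)] by auto
  next
    fix x assume "x \<in> ?B"
    then have u: "\<bar>2 * real k * x - 1\<bar> \<in> irr01"
        "1 / (2 * real k + 1) < x \<and> x < 1 / (2 * real k - 1)"
      using S band unfolding B by auto
    have "x \<notin> \<rat>"
    proof
      assume "x \<in> \<rat>"
      then have "\<bar>2 * real k * x - 1\<bar> \<in> \<rat>" by (simp add: abs_if)
      with u(1) show False by (simp add: irr01_def)
    qed
    moreover have "0 < 1 / (2 * real k + 1)" "1 / (2 * real k - 1) \<le> 1" using k by simp_all
    then have "0 < x" "x < 1" using u(2) by linarith+
    ultimately have x: "x \<in> irr01" by (simp add: irr01_def)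
    then show "x \<in> ?A"
      using \<open>x \<in> ?B\<close> sengel_k_eq_iff[OF x k] u(2) sengel_T_eq[OF x] unfolding B by auto
  qed
qed

(* The two summands come from the branches onto (0, 1/(2k-1)) and (0, 1/(2k+1)).
   For k = 0 both sides vanish, the right one because 1 / 0 = 0. *)
lemma emeasure_sengel_T_preimage:
  assumes S: "S \<subseteq> irr01" and [measurable]: "S \<in> sets borel"
  shows "emeasure lborel {x \<in> irr01. sengel_k x = k \<and> sengel_T x \<in> S} =
    ennreal (1 / (2 * real k)) *
      (emeasure lborel {z \<in> S. k \<le> sengel_k z} + emeasure lborel {z \<in> S. k < sengel_k z})"
proof (cases "k = 0")
  case True
  then show ?thesis by (simp add: sengel_k_eq_0_empty)
next
  case False
  then have k: "1 \<le> k" by simp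
  have [measurable]: "{z \<in> S. k \<le> sengel_k z} \<in> sets borel" "{z \<in> S. k < sengel_k z} \<in> sets borel"
    by measurable
  have branches_sets: "(\<lambda>x. 2 * real k * x - 1) -` {z \<in> S. k \<le> sengel_k z} \<in> sets lborel"
      "(\<lambda>x. 1 - 2 * real k * x) -` {z \<in> S. k < sengel_k z} \<in> sets lborel"
    by (simp_all only: sets_lborel, (rule measurable_sets_borel[where M=borel]; measurable)+)
  have pos: "0 < z" if "z \<in> S" for z using that S irr01_D(1) by blast
  have "(\<lambda>x. 2 * real k * x - 1) -` {z \<in> S. k \<le> sengel_k z} \<inter>
      (\<lambda>x. 1 - 2 * real k * x) -` {z \<in> S. k < sengel_k z} = {}"
    by (fastforce dest: pos)
  then have "emeasure lborel {x \<in> irr01. sengel_k x = k \<and> sengel_T x \<in> S} =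
      emeasure lborel ((\<lambda>x. 2 * real k * x - 1) -` {z \<in> S. k \<le> sengel_k z}) +
      emeasure lborel ((\<lambda>x. 1 - 2 * real k * x) -` {z \<in> S. k < sengel_k z})"
    unfolding sengel_T_preimage_eq[OF S k] by (intro plus_emeasure[symmetric] branches_sets)
  also have "\<dots> = ennreal (1 / (2 * real k)) * emeasure lborel {z \<in> S. k \<le> sengel_k z} +
      ennreal (1 / (2 * real k)) * emeasure lborel {z \<in> S. k < sengel_k z}"
    using k emeasure_lborel_affine_vimage[of "2 * real k" "{z \<in> S. k \<le> sengel_k z}" _ "- 1"]
      emeasure_lborel_affine_vimage[of "- 2 * real k" "{z \<in> S. k < sengel_k z}" _ 1]
    by simp
  finally show ?thesis by (simp add: distrib_left)
qed

lemma emeasure_sengel_T_preimage_le: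
  assumes "S \<subseteq> irr01" "S \<in> sets borel"
  shows "emeasure lborel {x \<in> irr01. sengel_k x = k \<and> sengel_T x \<in> S}
    \<le> ennreal (1 / real k) * emeasure lborel S"
proof -
  have "emeasure lborel {x \<in> irr01. sengel_k x = k \<and> sengel_T x \<in> S} \<le>
      ennreal (1 / (2 * real k)) * (emeasure lborel S + emeasure lborel S)"
    unfolding emeasure_sengel_T_preimage[OF assms] using assms(2)
    by (intro mult_left_mono add_mono emeasure_mono) auto
  also have "\<dots> = ennreal (1 / (2 * real k)) * 2 * emeasure lborel S"
    by (metis mult.assoc mult_2)
  also have "ennreal (1 / (2 * real k)) * 2 = ennreal (1 / real k)"
    using ennreal_mult'[of "1 / (2 * real k)" 2] by simp
  finally show ?thesis .
qed

lemma emeasure_sengel_T_preimage_ge: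
  assumes "S \<subseteq> irr01" "S \<in> sets borel"
  shows "ennreal (1 / (2 * real k)) * emeasure lborel {z \<in> S. k \<le> sengel_k z}
    \<le> emeasure lborel {x \<in> irr01. sengel_k x = k \<and> sengel_T x \<in> S}"
  unfolding emeasure_sengel_T_preimage[OF assms] by (intro mult_left_mono) auto

lemma emeasure_irr01_less:
  assumes "0 \<le> a" "a \<le> 1"
  shows "emeasure lborel {x \<in> irr01. x < a} = ennreal a"
proof -
  have "{x \<in> irr01. x < a} = {0<..<a} - \<rat>" using assms by (auto simp: irr01_def)
  then show ?thesis
    using emeasure_Diff_null_set[OF Rats_null_sets, of "{0<..<a}"]
      assms by simp
qed

lemma emeasure_irr01: "emeasure lborel irr01 = 1"
proof -
  have "{x \<in> irr01. x < 1} = irr01" by (auto simp: irr01_def)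
  then show ?thesis using emeasure_irr01_less[of 1] by simp
qed

lemma emeasure_sengel_k_ge:
  assumes k: "1 \<le> k"
  shows "emeasure lborel {x \<in> irr01. k \<le> sengel_k x} = ennreal (1 / (2 * real k - 1))"
proof -
  have "{x \<in> irr01. k \<le> sengel_k x} = {x \<in> irr01. x < 1 / (2 * real k - 1)}"
    using sengel_k_ge_iff[OF _ k] by auto
  then show ?thesis using k by (simp add: emeasure_irr01_less)
qed

lemma emeasure_sengel_k_eq:
  assumes k: "1 \<le> k"
  shows "emeasure lborel {x \<in> irr01. sengel_k x = k} =
    ennreal (1 / (2 * real k - 1) - 1 / (2 * real k + 1))"
proof -
  have "{x \<in> irr01. sengel_k x = k} = {x \<in> irr01. k \<le> sengel_k x} - {x \<in> irr01. Suc k \<le> sengel_k x}"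
    by auto
  moreover have "{x \<in> irr01. j \<le> sengel_k x} \<in> sets lborel" for j by measurable
  ultimately have "emeasure lborel {x \<in> irr01. sengel_k x = k} =
      emeasure lborel {x \<in> irr01. k \<le> sengel_k x} - emeasure lborel {x \<in> irr01. Suc k \<le> sengel_k x}"
    using emeasure_sengel_k_ge[of "Suc k"] by (simp add: emeasure_Diff subset_iff)
  also have "\<dots> = ennreal (1 / (2 * real k - 1) - 1 / (2 * real k + 1))"
    using k by (simp add: emeasure_sengel_k_ge ennreal_minus add.commute frac_le)
  finally show ?thesis .
qed

lemma emeasure_sengel_k_eq_bounds:
  assumes k: "1 \<le> k"
  shows "ennreal (1 / (2 * real k ^ 2)) \<le> emeasure lborel {x \<in> irr01. sengel_k x = k}"
    "emeasure lborel {x \<in> irr01. sengel_k x = k} \<le> ennreal (1 / real k ^ 2)"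
proof -
  have "1 / (2 * real k - 1) - 1 / (2 * real k + 1) = 2 / (4 * real k ^ 2 - 1)"
    using k by (simp add: field_simps power2_eq_square)
  moreover have "1 \<le> real k ^ 2" using k by simp
  then have "1 / (2 * real k ^ 2) \<le> 2 / (4 * real k ^ 2 - 1)"
    "2 / (4 * real k ^ 2 - 1) \<le> 1 / real k ^ 2"
    by (simp_all add: divide_simps)
  ultimately show "ennreal (1 / (2 * real k ^ 2)) \<le> emeasure lborel {x \<in> irr01. sengel_k x = k}"
    "emeasure lborel {x \<in> irr01. sengel_k x = k} \<le> ennreal (1 / real k ^ 2)"
    using k by (simp_all add: emeasure_sengel_k_eq ennreal_leI)
qed

section \<open>Measures with a density constant on level sets\<close>

definition digit_uniform :: "(real set \<Rightarrow> ennreal) \<Rightarrow> bool" where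
  "digit_uniform \<nu> \<longleftrightarrow> (\<exists>c. \<forall>S \<in> sets borel. S \<subseteq> irr01 \<longrightarrow>
     \<nu> S = (\<Sum>k. c k * emeasure lborel {x \<in> S. sengel_k x = k}))"

lemma digit_uniform_lborel: "digit_uniform (emeasure lborel)"
  unfolding digit_uniform_def
proof (intro exI[of _ "\<lambda>_. 1"] ballI impI)
  fix S :: "real set" assume "S \<in> sets borel"
  then show "emeasure lborel S = (\<Sum>k. 1 * emeasure lborel {x \<in> S. sengel_k x = k})"
    using emeasure_eq_suminf_level_sets[of S lborel sengel_k "\<lambda>_. True"] by simp
qed

lemma emeasure_sengel_T_preimage_levels:
  assumes S: "S \<subseteq> irr01" and [measurable]: "S \<in> sets borel"
  shows "emeasure lborel {x \<in> irr01. sengel_k x = k \<and> sengel_T x \<in> S \<and> P (sengel_k (sengel_T x))} =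
    (\<Sum>j. ennreal (1 / (2 * real k)) * (of_bool (P j \<and> k \<le> j) + of_bool (P j \<and> k < j)) *
      emeasure lborel {z \<in> S. sengel_k z = j})"
proof -
  have "{z \<in> S. P (sengel_k z)} \<subseteq> irr01" using S by auto
  then have "emeasure lborel
      {x \<in> irr01. sengel_k x = k \<and> sengel_T x \<in> S \<and> P (sengel_k (sengel_T x))} =
    ennreal (1 / (2 * real k)) * (emeasure lborel {z \<in> S. P (sengel_k z) \<and> k \<le> sengel_k z} +
      emeasure lborel {z \<in> S. P (sengel_k z) \<and> k < sengel_k z})"
    using emeasure_sengel_T_preimage[of "{z \<in> S. P (sengel_k z)}" k] by simp
  also have "\<dots> = ennreal (1 / (2 * real k)) *
      ((\<Sum>j. of_bool (P j \<and> k \<le> j) * emeasure lborel {z \<in> S. sengel_k z = j}) +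
       (\<Sum>j. of_bool (P j \<and> k < j) * emeasure lborel {z \<in> S. sengel_k z = j}))"
    using emeasure_eq_suminf_level_sets[of S lborel sengel_k "\<lambda>j. P j \<and> k \<le> j"]
      emeasure_eq_suminf_level_sets[of S lborel sengel_k "\<lambda>j. P j \<and> k < j"] by simp
  also have "\<dots> = (\<Sum>j. ennreal (1 / (2 * real k)) * (of_bool (P j \<and> k \<le> j) + of_bool (P j \<and> k < j)) *
      emeasure lborel {z \<in> S. sengel_k z = j})"
    by (simp add: suminf_add[symmetric] distrib_right mult.assoc)
  finally show ?thesis .
qed

lemma digit_uniform_transfer:
  assumes "digit_uniform \<nu>"
  shows "digit_uniform (\<lambda>S. \<nu> {y \<in> irr01. Q (sengel_k y) (sengel_k (sengel_T y)) \<and> sengel_T y \<in> S})"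
proof -
  obtain c where c: "\<And>S. S \<in> sets borel \<Longrightarrow> S \<subseteq> irr01 \<Longrightarrow>
      \<nu> S = (\<Sum>k. c k * emeasure lborel {x \<in> S. sengel_k x = k})"
    using assms unfolding digit_uniform_def by blast
  define w where
    "w k j = ennreal (1 / (2 * real k)) * (of_bool (Q k j \<and> k \<le> j) + of_bool (Q k j \<and> k < j))"
    for k j
  have meas: "{y \<in> irr01. Q (sengel_k y) (sengel_k (sengel_T y)) \<and> sengel_T y \<in> S} \<in> sets borel"
    if [measurable]: "S \<in> sets borel" for S
    by measurable
  have "\<nu> {y \<in> irr01. Q (sengel_k y) (sengel_k (sengel_T y)) \<and> sengel_T y \<in> S} =
      (\<Sum>j. (\<Sum>k. c k * w k j) * emeasure lborel {z \<in> S. sengel_k z = j})"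
    if S: "S \<in> sets borel" "S \<subseteq> irr01" for S
  proof -
    have "{x \<in> {y \<in> irr01. Q (sengel_k y) (sengel_k (sengel_T y)) \<and> sengel_T y \<in> S}.
        sengel_k x = k} =
        {x \<in> irr01. sengel_k x = k \<and> sengel_T x \<in> S \<and> Q k (sengel_k (sengel_T x))}" for k
      by auto
    then have "\<nu> {y \<in> irr01. Q (sengel_k y) (sengel_k (sengel_T y)) \<and> sengel_T y \<in> S} =
        (\<Sum>k. c k * (\<Sum>j. w k j * emeasure lborel {z \<in> S. sengel_k z = j}))"
      using S c[OF meas[OF S(1)]] by (simp add: emeasure_sengel_T_preimage_levels w_def)
    also have "\<dots> = (\<Sum>k. \<Sum>j. c k * w k j * emeasure lborel {z \<in> S. sengel_k z = j})"
      by (simp add: mult.assoc)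
    also have "\<dots> = (\<Sum>j. \<Sum>k. c k * w k j * emeasure lborel {z \<in> S. sengel_k z = j})"
      by (rule ennreal_suminf_swap)
    finally show ?thesis by simp
  qed
  with meas show ?thesis unfolding digit_uniform_def by (intro exI[of _ "\<lambda>j. \<Sum>k. c k * w k j"]) auto
qed

lemma digit_uniform_le:
  assumes "digit_uniform \<nu>" "H \<in> sets borel" "H \<subseteq> irr01"
    and H: "\<And>k. emeasure lborel {x \<in> H. sengel_k x = k}
      \<le> r * emeasure lborel {x \<in> irr01. sengel_k x = k}"
  shows "\<nu> H \<le> r * \<nu> irr01"
proof -
  obtain c where c: "\<And>S. S \<in> sets borel \<Longrightarrow> S \<subseteq> irr01 \<Longrightarrow>
      \<nu> S = (\<Sum>k. c k * emeasure lborel {x \<in> S. sengel_k x = k})"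
    using assms(1) unfolding digit_uniform_def by blast
  have "\<nu> H = (\<Sum>k. c k * emeasure lborel {x \<in> H. sengel_k x = k})" using c assms(2,3) by simp
  also have "\<dots> \<le> (\<Sum>k. c k * (r * emeasure lborel {x \<in> irr01. sengel_k x = k}))"
    by (intro suminf_le mult_left_mono H) auto
  also have "\<dots> = r * \<nu> irr01" using c[of irr01] by (simp add: mult.left_commute)
  finally show ?thesis .
qed

definition sengel_cylinder :: "(nat \<Rightarrow> nat \<Rightarrow> nat \<Rightarrow> bool) \<Rightarrow> nat \<Rightarrow> real set" where
  "sengel_cylinder Q m = {x \<in> irr01. \<forall>i<m.
     Q i (sengel_k ((sengel_T ^^ i) x)) (sengel_k ((sengel_T ^^ Suc i) x))}"

lemma sengel_cylinder_sets [measurable]: "sengel_cylinder Q m \<in> sets borel"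
  unfolding sengel_cylinder_def by measurable

lemma sengel_cylinder_0: "sengel_cylinder Q 0 = irr01"
  by (simp add: sengel_cylinder_def)

lemma sengel_cylinder_Suc:
  "sengel_cylinder Q (Suc m) =
    {x \<in> sengel_cylinder Q m.
      (sengel_T ^^ m) x \<in> {y \<in> irr01. Q m (sengel_k y) (sengel_k (sengel_T y))}}"
  by (auto simp: sengel_cylinder_def less_Suc_eq funpow_sengel_T_irr01)

lemma digit_uniform_cylinder:
  "digit_uniform (\<lambda>S. emeasure lborel {x \<in> sengel_cylinder Q m. (sengel_T ^^ m) x \<in> S})"
proof (induction m)
  case 0
  have "{x \<in> sengel_cylinder Q 0. (sengel_T ^^ 0) x \<in> S} = S" if "S \<subseteq> irr01" for S
    using that by (auto simp: sengel_cylinder_0)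
  then show ?case using digit_uniform_lborel by (simp add: digit_uniform_def)
next
  case (Suc m)
  have "{x \<in> sengel_cylinder Q (Suc m). (sengel_T ^^ Suc m) x \<in> S} =
      {x \<in> sengel_cylinder Q m. (sengel_T ^^ m) x \<in>
        {y \<in> irr01. Q m (sengel_k y) (sengel_k (sengel_T y)) \<and> sengel_T y \<in> S}}" for S
    by (auto simp: sengel_cylinder_Suc funpow_swap1)
  then show ?case using digit_uniform_transfer[OF Suc.IH] by simp
qed

lemma emeasure_sengel_cylinder_Suc_le:
  assumes "\<And>k. emeasure lborel {y \<in> irr01. sengel_k y = k \<and> Q m k (sengel_k (sengel_T y))}
    \<le> r * emeasure lborel {y \<in> irr01. sengel_k y = k}"
  shows "emeasure lborel (sengel_cylinder Q (Suc m)) \<le> r * emeasure lborel (sengel_cylinder Q m)"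
proof -
  define H where "H = {y \<in> irr01. Q m (sengel_k y) (sengel_k (sengel_T y))}"
  have "{y \<in> H. sengel_k y = k} = {y \<in> irr01. sengel_k y = k \<and> Q m k (sengel_k (sengel_T y))}" for k
    by (auto simp: H_def)
  then have "emeasure lborel {x \<in> sengel_cylinder Q m. (sengel_T ^^ m) x \<in> H}
      \<le> r * emeasure lborel {x \<in> sengel_cylinder Q m. (sengel_T ^^ m) x \<in> irr01}"
    by (intro digit_uniform_le[OF digit_uniform_cylinder]) (auto simp: H_def assms)
  moreover have "{x \<in> sengel_cylinder Q m. (sengel_T ^^ m) x \<in> irr01} = sengel_cylinder Q m"
    by (auto simp: sengel_cylinder_def funpow_sengel_T_irr01)
  ultimately show ?thesis by (simp add: sengel_cylinder_Suc H_def)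
qed

lemma emeasure_sengel_cylinder_le_prod:
  assumes "\<And>i k. emeasure lborel {y \<in> irr01. sengel_k y = k \<and> Q i k (sengel_k (sengel_T y))}
    \<le> ennreal (r i) * emeasure lborel {y \<in> irr01. sengel_k y = k}"
    and "\<And>i. 0 \<le> r i"
  shows "emeasure lborel (sengel_cylinder Q m) \<le> ennreal (\<Prod>i<m. r i)"
proof (induction m)
  case 0
  then show ?case by (simp add: sengel_cylinder_0 emeasure_irr01)
next
  case (Suc m)
  have "emeasure lborel (sengel_cylinder Q (Suc m))
      \<le> ennreal (r m) * emeasure lborel (sengel_cylinder Q m)"
    by (rule emeasure_sengel_cylinder_Suc_le[OF assms(1)])
  also have "\<dots> \<le> ennreal (r m) * ennreal (\<Prod>i<m. r i)"
    by (intro mult_left_mono Suc.IH) simp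
  also have "\<dots> = ennreal (\<Prod>i<Suc m. r i)"
    using assms(2) by (simp add: ennreal_mult[symmetric] prod_nonneg mult.commute)
  finally show ?case .
qed

lemma sengel_cylinders_null:
  assumes "\<And>i k. emeasure lborel {y \<in> irr01. sengel_k y = k \<and> Q i k (sengel_k (sengel_T y))}
    \<le> ennreal (r i) * emeasure lborel {y \<in> irr01. sengel_k y = k}"
    and "\<And>i. 0 \<le> r i" and "(\<lambda>m. \<Prod>i<m. r i) \<longlonglongrightarrow> 0"
  shows "(\<Inter>m. sengel_cylinder Q m) \<in> null_sets lborel"
proof -
  have "emeasure lborel (\<Inter>m. sengel_cylinder Q m) \<le> ennreal (\<Prod>i<m. r i)" for m
    using emeasure_mono[of "\<Inter>m. sengel_cylinder Q m" "sengel_cylinder Q m" lborel]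
      emeasure_sengel_cylinder_le_prod[where Q = Q and r = r, OF assms(1,2)]
    by (auto intro: order.trans)
  then have "emeasure lborel (\<Inter>m. sengel_cylinder Q m) \<le> ennreal 0"
    by (intro LIMSEQ_le_const[OF tendsto_ennrealI[OF assms(3)]]) auto
  then show ?thesis by (simp add: null_sets_def)
qed

lemma emeasure_sengel_step_le:
  assumes "\<And>k. emeasure lborel {y \<in> irr01. sengel_k y = k \<and> P k (sengel_k (sengel_T y))}
    \<le> ennreal r * emeasure lborel {y \<in> irr01. sengel_k y = k}"
    and "0 \<le> r"
  shows "emeasure lborel
    {x \<in> irr01. P (sengel_k ((sengel_T ^^ m) x)) (sengel_k ((sengel_T ^^ Suc m) x))} \<le> ennreal r"
proof -
  define Q where "Q i = (if i = m then P else (\<lambda>_ _. True))" for i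
  have "{x \<in> irr01. P (sengel_k ((sengel_T ^^ m) x)) (sengel_k ((sengel_T ^^ Suc m) x))} =
      sengel_cylinder Q (Suc m)"
    by (auto simp: sengel_cylinder_def Q_def less_Suc_eq)
  also have "emeasure lborel \<dots> \<le> ennreal (\<Prod>i<Suc m. if i = m then r else 1)"
    using assms by (intro emeasure_sengel_cylinder_le_prod) (auto simp: Q_def)
  finally show ?thesis by simp
qed

section \<open>Jumps of the digits\<close>

lemma sengel_jump_set_eq:
  assumes "0 \<le> a"
  shows "{y \<in> irr01. sengel_k y = k \<and> a < real (sengel_k (sengel_T y))} =
    {y \<in> irr01. sengel_k y = k \<and> sengel_T y \<in> {z \<in> irr01. Suc (nat \<lfloor>a\<rfloor>) \<le> sengel_k z}}"
  using less_nat_iff_floor_Suc_le[OF assms] sengel_T_irr01 by auto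

lemma emeasure_sengel_jump_le:
  assumes t: "0 < t"
  shows "emeasure lborel {y \<in> irr01. sengel_k y = k \<and> t * real k < real (sengel_k (sengel_T y))}
    \<le> ennreal (2 / t) * emeasure lborel {y \<in> irr01. sengel_k y = k}"
proof (cases "k = 0")
  case True
  then show ?thesis by (simp add: sengel_k_eq_0_empty)
next
  case False
  then have k: "1 \<le> k" by simp
  define M where "M = Suc (nat \<lfloor>t * real k\<rfloor>)"
  have M: "t * real k < real M" "1 \<le> M"
    using less_nat_iff_floor_Suc_le[of "t * real k" M] t by (auto simp: M_def)
  have tk: "0 \<le> t * real k" using t by simp
  have "emeasure lborel {y \<in> irr01. sengel_k y = k \<and> t * real k < real (sengel_k (sengel_T y))}
      \<le> ennreal (1 / real k) * emeasure lborel {z \<in> irr01. M \<le> sengel_k z}"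
    unfolding sengel_jump_set_eq[OF tk] M_def by (intro emeasure_sengel_T_preimage_le) auto
  also have "\<dots> = ennreal (1 / (real k * (2 * real M - 1)))"
    using M(2) by (simp add: emeasure_sengel_k_ge flip: ennreal_mult)
  also have "\<dots> \<le> ennreal (2 / t * (1 / (2 * real k ^ 2)))"
  proof (rule ennreal_leI)
    have "t * real k ^ 2 = real k * (t * real k)" by (simp add: power2_eq_square)
    also have "\<dots> \<le> real k * (2 * real M - 1)" using M by (intro mult_left_mono) auto
    finally have "t * real k ^ 2 \<le> real k * (2 * real M - 1)" .
    moreover have "0 < t * real k ^ 2" using t k by simp
    ultimately have "1 / (real k * (2 * real M - 1)) \<le> 1 / (t * real k ^ 2)"
      by (intro frac_le) auto
    then show "1 / (real k * (2 * real M - 1)) \<le> 2 / t * (1 / (2 * real k ^ 2))" by simp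
  qed
  also have "\<dots> = ennreal (2 / t) * ennreal (1 / (2 * real k ^ 2))"
    using t by (intro ennreal_mult) auto
  also have "\<dots> \<le> ennreal (2 / t) * emeasure lborel {y \<in> irr01. sengel_k y = k}"
    by (intro mult_left_mono emeasure_sengel_k_eq_bounds(1)[OF k]) auto
  finally show ?thesis .
qed

lemma emeasure_sengel_jump_ge:
  assumes t: "0 < t"
  shows "ennreal (1 / (4 * (t + 1))) * emeasure lborel {y \<in> irr01. sengel_k y = k}
    \<le> emeasure lborel {y \<in> irr01. sengel_k y = k \<and> t * real k < real (sengel_k (sengel_T y))}"
proof (cases "k = 0")
  case True
  then show ?thesis by (simp add: sengel_k_eq_0_empty)
next
  case False
  then have k: "1 \<le> k" by simp
  have tk: "0 \<le> t * real k" using t by simp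
  define M where "M = max k (Suc (nat \<lfloor>t * real k\<rfloor>))"
  have "1 + real_of_int \<lfloor>t * real k\<rfloor> \<le> t * real k + real k"
    using of_int_floor_le[of "t * real k"] k by linarith
  then have M: "1 \<le> M" "real M \<le> (t + 1) * real k"
    using k t by (auto simp: M_def distrib_right max_def)
  have "ennreal (1 / (4 * (t + 1))) * emeasure lborel {y \<in> irr01. sengel_k y = k}
      \<le> ennreal (1 / (4 * (t + 1))) * ennreal (1 / real k ^ 2)"
    by (intro mult_left_mono emeasure_sengel_k_eq_bounds(2)[OF k]) auto
  also have "\<dots> = ennreal (1 / (4 * (t + 1) * real k ^ 2))"
    using t by (simp flip: ennreal_mult)
  also have "\<dots> \<le> ennreal (1 / (2 * real k) * (1 / (2 * real M - 1)))"
  proof (rule ennreal_leI)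
    have "2 * real k * (2 * real M - 1) \<le> 2 * real k * (2 * ((t + 1) * real k))"
      using M by (intro mult_left_mono) auto
    also have "\<dots> = 4 * (t + 1) * real k ^ 2" by (simp add: power2_eq_square)
    finally show "1 / (4 * (t + 1) * real k ^ 2) \<le> 1 / (2 * real k) * (1 / (2 * real M - 1))"
      using M(1) k by (simp add: frac_le)
  qed
  also have "\<dots> = ennreal (1 / (2 * real k)) * emeasure lborel {z \<in> irr01. M \<le> sengel_k z}"
    unfolding emeasure_sengel_k_ge[OF M(1)] using M(1) by (intro ennreal_mult) auto
  also have "{z \<in> irr01. M \<le> sengel_k z} =
      {z \<in> {z \<in> irr01. Suc (nat \<lfloor>t * real k\<rfloor>) \<le> sengel_k z}. k \<le> sengel_k z}"
    by (auto simp: M_def)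
  also have "ennreal (1 / (2 * real k)) * emeasure lborel \<dots>
      \<le> emeasure lborel {y \<in> irr01. sengel_k y = k \<and> t * real k < real (sengel_k (sengel_T y))}"
    unfolding sengel_jump_set_eq[OF tk] by (intro emeasure_sengel_T_preimage_ge) auto
  finally show ?thesis .
qed

lemma emeasure_sengel_no_jump_le:
  assumes t: "0 < t"
  shows "emeasure lborel {y \<in> irr01. sengel_k y = k \<and> \<not> t * real k < real (sengel_k (sengel_T y))}
    \<le> ennreal (1 - 1 / (4 * (t + 1))) * emeasure lborel {y \<in> irr01. sengel_k y = k}"
proof (cases "k = 0")
  case True
  then show ?thesis by (simp add: sengel_k_eq_0_empty)
next
  case False
  then have k: "1 \<le> k" by simp
  define L where "L = {y \<in> irr01. sengel_k y = k}"
  define J where "J = {y \<in> irr01. sengel_k y = k \<and> t * real k < real (sengel_k (sengel_T y))}"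
  define a where "a = 1 / (4 * (t + 1))"
  define l where "l = 1 / (2 * real k - 1) - 1 / (2 * real k + 1)"
  have [measurable]: "L \<in> sets borel" "J \<in> sets borel" unfolding L_def J_def by measurable
  have a: "0 \<le> a" "a \<le> 1" using t by (auto simp: a_def field_simps)
  have L: "emeasure lborel L = ennreal l" "0 \<le> l"
    using emeasure_sengel_k_eq[OF k] k by (auto simp: L_def l_def frac_le)
  have "emeasure lborel J \<le> emeasure lborel L" by (rule emeasure_mono) (auto simp: L_def J_def)
  then have "emeasure lborel (L - J) = emeasure lborel L - emeasure lborel J"
    using L by (intro emeasure_Diff) (auto simp: L_def J_def top_unique)
  also have "\<dots> \<le> emeasure lborel L - ennreal a * emeasure lborel L"
    using emeasure_sengel_jump_ge[OF t, of k]
    by (intro ennreal_minus_mono) (auto simp: L_def J_def a_def)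
  also have "\<dots> = ennreal (1 - a) * emeasure lborel L"
    using L a by (simp add: ennreal_minus ennreal_mult[symmetric] left_diff_distrib)
  also have "L - J = {y \<in> irr01. sengel_k y = k \<and> \<not> t * real k < real (sengel_k (sengel_T y))}"
    by (auto simp: L_def J_def)
  finally show ?thesis by (simp add: L_def a_def)
qed

lemma emeasure_sengel_jump_event_le:
  assumes "0 < t"
  shows "emeasure lborel {x \<in> irr01.
      t * real (sengel_k ((sengel_T ^^ m) x)) < real (sengel_k ((sengel_T ^^ Suc m) x))}
    \<le> ennreal (2 / t)"
  using assms
  by (intro emeasure_sengel_step_le[where P = "\<lambda>k j. t * real k < real j"] emeasure_sengel_jump_le)
    auto

lemma sengel_no_jump_cylinders_null:
  assumes t: "\<And>i. 0 < t i" and diverge: "\<not> summable (\<lambda>i. 1 / (4 * (t i + 1)))"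
  shows "(\<Inter>m. sengel_cylinder (\<lambda>i k j. N \<le> i \<longrightarrow> \<not> t i * real k < real j) m) \<in> null_sets lborel"
proof -
  define a where "a i = (if N \<le> i then 1 / (4 * (t i + 1)) else 0)" for i
  have a: "0 \<le> a i" "a i \<le> 1" for i
    using t[of i] by (auto simp: a_def field_simps)
  have "\<not> summable a"
    using diverge by (subst summable_cong[where g = "\<lambda>i. 1 / (4 * (t i + 1))"])
      (auto simp: a_def eventually_sequentially)
  show ?thesis
  proof (rule sengel_cylinders_null)
    show "emeasure lborel {y \<in> irr01. sengel_k y = k \<and>
        (N \<le> i \<longrightarrow> \<not> t i * real k < real (sengel_k (sengel_T y)))}
      \<le> ennreal (1 - a i) * emeasure lborel {y \<in> irr01. sengel_k y = k}" for i k
      using emeasure_sengel_no_jump_le[OF t[of i], of k] by (simp add: a_def)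
    show "0 \<le> 1 - a i" for i using a[of i] by simp
    show "(\<lambda>m. \<Prod>i<m. 1 - a i) \<longlonglongrightarrow> 0"
      using a \<open>\<not> summable a\<close> by (intro prod_one_minus_tendsto_zero)
  qed
qed

lemma AE_sengel_R_ratio_eventually_le:
  fixes \<phi> :: "nat \<Rightarrow> real"
  assumes pos: "\<And>n. n \<ge> 1 \<Longrightarrow> \<phi> n > 0" and sum: "summable (\<lambda>n. 1 / \<phi> (Suc n))" and e: "0 < e"
  shows "AE x in lborel. x \<in> irr01 \<longrightarrow> (\<forall>\<^sub>F n in sequentially. sengel_R n x / \<phi> n \<le> e)"
proof -
  define t where "t m = e * \<phi> (Suc (Suc m))" for m
  have t: "0 < t m" for m using pos e by (simp add: t_def)
  define E where "E m = {x \<in> irr01.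
    t m * real (sengel_k ((sengel_T ^^ m) x)) < real (sengel_k ((sengel_T ^^ Suc m) x))}" for m
  have E_sets: "E m \<in> sets borel" for m unfolding E_def by measurable
  have E: "emeasure lborel (E m) \<le> ennreal (2 / t m)" for m
    unfolding E_def by (rule emeasure_sengel_jump_event_le[OF t])
  have "summable (\<lambda>m. 2 / e * (1 / \<phi> (Suc (Suc m))))"
    using sum summable_Suc_iff[of "\<lambda>n. 1 / \<phi> (Suc n)"] by (intro summable_mult) simp
  moreover have "norm (measure lborel (E m)) \<le> 2 / e * (1 / \<phi> (Suc (Suc m)))" for m
    using E[of m] t[of m] unfolding measure_def by (simp add: enn2real_leI t_def)
  ultimately have summ: "summable (\<lambda>m. measure lborel (E m))"
    by (rule summable_comparison_test')
  have fin: "emeasure lborel (E m) < \<infinity>" for m using E[of m] by (simp add: le_less_trans)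
  have "AE x in lborel. \<forall>\<^sub>F m in sequentially. x \<in> space lborel - E m"
    by (rule borel_cantelli_AE1[OF _ fin summ]) (simp add: E_sets)
  then show ?thesis
  proof (rule eventually_mono, intro impI)
    fix x assume ev: "\<forall>\<^sub>F m in sequentially. x \<in> space lborel - E m" and x: "x \<in> irr01"
    have "\<forall>\<^sub>F m in sequentially. sengel_R (Suc (Suc m)) x / \<phi> (Suc (Suc m)) \<le> e"
      using ev
    proof (rule eventually_mono)
      fix m assume "x \<in> space lborel - E m"
      then have "\<not> t m < sengel_R (Suc (Suc m)) x"
        unfolding sengel_R_gt_iff[OF x] E_def using x by simp
      then show "sengel_R (Suc (Suc m)) x / \<phi> (Suc (Suc m)) \<le> e"
        using pos[of "Suc (Suc m)"] by (simp add: t_def divide_le_eq)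
    qed
    then show "\<forall>\<^sub>F n in sequentially. sengel_R n x / \<phi> n \<le> e"
      using eventually_sequentially_Suc[of "\<lambda>n. sengel_R (Suc n) x / \<phi> (Suc n) \<le> e"]
        eventually_sequentially_Suc[of "\<lambda>n. sengel_R n x / \<phi> n \<le> e"] by blast
  qed
qed

lemma AE_sengel_R_ratio_frequently_gt:
  fixes \<phi> :: "nat \<Rightarrow> real"
  assumes pos: "\<And>n. n \<ge> 1 \<Longrightarrow> \<phi> n > 0" and diverge: "\<not> summable (\<lambda>n. 1 / \<phi> (Suc n))"
    and e: "0 < e"
  shows "AE x in lborel. x \<in> irr01 \<longrightarrow> (\<exists>\<^sub>F n in sequentially. e < sengel_R n x / \<phi> n)"
proof -
  define t where "t m = e * \<phi> (Suc (Suc m))" for m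
  have t: "0 < t m" for m using pos e by (simp add: t_def)
  define Q where "Q N i k j \<longleftrightarrow> (N \<le> i \<longrightarrow> \<not> t i * real k < real j)" for N i k j
  have "\<not> summable (\<lambda>i. 1 / (4 * e * \<phi> (Suc (Suc i)) + 4))"
    using diverge summable_Suc_iff[of "\<lambda>n. 1 / \<phi> (Suc n)"] pos e
    by (intro not_summable_inverse_affine[where f = "\<lambda>i. \<phi> (Suc (Suc i))"]) auto
  then have "\<not> summable (\<lambda>i. 1 / (4 * (t i + 1)))" by (simp add: t_def algebra_simps)
  then have null: "(\<Inter>m. sengel_cylinder (Q N) m) \<in> null_sets lborel" for N
    unfolding Q_def by (rule sengel_no_jump_cylinders_null[OF t])
  have "AE x in lborel. \<forall>N. x \<notin> (\<Inter>m. sengel_cylinder (Q N) m)"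
    unfolding AE_all_countable using AE_not_in[OF null] by blast
  then show ?thesis
  proof (rule eventually_mono, intro impI)
    fix x assume x_notin: "\<forall>N. x \<notin> (\<Inter>m. sengel_cylinder (Q N) m)" and x: "x \<in> irr01"
    show "\<exists>\<^sub>F n in sequentially. e < sengel_R n x / \<phi> n"
    proof (rule ccontr)
      assume "\<not> (\<exists>\<^sub>F n in sequentially. e < sengel_R n x / \<phi> n)"
      then have "\<forall>\<^sub>F n in sequentially. \<not> e < sengel_R n x / \<phi> n"
        by (simp add: not_frequently)
      then have "\<forall>\<^sub>F m in sequentially. \<not> e < sengel_R (Suc (Suc m)) x / \<phi> (Suc (Suc m))"
        using eventually_sequentially_Suc[of "\<lambda>n. \<not> e < sengel_R (Suc n) x / \<phi> (Suc n)"]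
          eventually_sequentially_Suc[of "\<lambda>n. \<not> e < sengel_R n x / \<phi> n"] by blast
      then obtain N where N: "\<And>m. N \<le> m \<Longrightarrow> \<not> t m < sengel_R (Suc (Suc m)) x"
        using pos by (auto simp: eventually_sequentially t_def pos_less_divide_eq mult.commute)
      have "x \<in> sengel_cylinder (Q N) m" for m
        using x N by (auto simp: sengel_cylinder_def Q_def sengel_R_gt_iff[OF x])
      with x_notin show False by blast
    qed
  qed
qed

lemma AE_mem_irr01: "AE x in lborel. x \<in> {0<..<1} \<longrightarrow> x \<in> irr01"
  using AE_not_in[OF Rats_null_sets] by eventually_elim (simp add: irr01_def)

lemma limsup_sengel_R_ratio_eq_0:
  fixes \<phi> :: "nat \<Rightarrow> real"
  assumes pos: "\<And>n. n \<ge> 1 \<Longrightarrow> \<phi> n > 0" and sum: "summable (\<lambda>n. 1 / \<phi> (Suc n))"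
  shows "AE x in lborel. x \<in> {0<..<1} \<longrightarrow> limsup (\<lambda>n. ereal (sengel_R n x / \<phi> n)) = 0"
proof -
  have "AE x in lborel. \<forall>M. x \<in> irr01 \<longrightarrow>
      (\<forall>\<^sub>F n in sequentially. sengel_R n x / \<phi> n \<le> 1 / real (Suc M))"
    unfolding AE_all_countable
    by (intro allI AE_sengel_R_ratio_eventually_le[of \<phi>, OF pos sum]) simp_all
  with AE_mem_irr01 show ?thesis
  proof eventually_elim
    case (elim x)
    show ?case
    proof (intro impI limsup_ereal_eq_0)
      assume "x \<in> {0<..<1}"
      with elim have x: "x \<in> irr01" by simp
      show "\<forall>\<^sub>F n in sequentially. 0 < sengel_R n x / \<phi> n"
        using sengel_R_pos[OF x] pos unfolding eventually_sequentially
        by (auto intro: divide_pos_pos)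
      show "\<forall>\<^sub>F n in sequentially. sengel_R n x / \<phi> n \<le> 1 / real (Suc M)" for M
        using elim x by blast
    qed
  qed
qed

lemma limsup_sengel_R_ratio_eq_PInfty:
  fixes \<phi> :: "nat \<Rightarrow> real"
  assumes pos: "\<And>n. n \<ge> 1 \<Longrightarrow> \<phi> n > 0" and diverge: "\<not> summable (\<lambda>n. 1 / \<phi> (Suc n))"
  shows "AE x in lborel. x \<in> {0<..<1} \<longrightarrow> limsup (\<lambda>n. ereal (sengel_R n x / \<phi> n)) = \<infinity>"
proof -
  have "AE x in lborel. \<forall>M. x \<in> irr01 \<longrightarrow>
      (\<exists>\<^sub>F n in sequentially. real (Suc M) < sengel_R n x / \<phi> n)"
    unfolding AE_all_countable
    by (intro allI AE_sengel_R_ratio_frequently_gt[of \<phi>, OF pos diverge]) simp_all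
  with AE_mem_irr01 show ?thesis
  proof eventually_elim
    case (elim x)
    show ?case
    proof (intro impI limsup_ereal_eq_PInfty)
      fix M :: nat assume "x \<in> {0<..<1}"
      with elim have "\<exists>\<^sub>F n in sequentially. real (Suc M) < sengel_R n x / \<phi> n" by blast
      then show "\<exists>\<^sub>F n in sequentially. real M < sengel_R n x / \<phi> n"
        by (rule frequently_elim1) simp
    qed
  qed
qed

theorem corollary1p4:
  fixes \<phi> :: "nat \<Rightarrow> real"
  assumes pos: "\<And>n. n \<ge> 1 \<Longrightarrow> \<phi> n > 0"
  shows "(summable (\<lambda>n. 1 / \<phi> (Suc n)) \<longrightarrow>
            (AE x in lborel. x \<in> {0<..<1} \<longrightarrow>
               limsup (\<lambda>n. ereal (sengel_R n x / \<phi> n)) = 0))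
       \<and> (\<not> summable (\<lambda>n. 1 / \<phi> (Suc n)) \<longrightarrow>
            (AE x in lborel. x \<in> {0<..<1} \<longrightarrow>
               limsup (\<lambda>n. ereal (sengel_R n x / \<phi> n)) = \<infinity>))"
  using limsup_sengel_R_ratio_eq_0[of \<phi>, OF pos] limsup_sengel_R_ratio_eq_PInfty[of \<phi>, OF pos]
  by blast

end
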